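(* Let $v$ be a weight on $[0,1)$ satisfying $\lim_{r\to1^-}v(r)=0$. For each $t\in[0,1)$ the operator $C_t$ maps $H^0_v$ into $H^0_v$, $C_t\colon H^0_v\to H^0_v$ is continuous, and $\|C_t\|_{H^0_v\to H^0_v}=\|C_t\|_{H^\infty_v\to H^\infty_v}$.
   Context: $\mathbb{D}=\{z\in\mathbb{C}:|z|<1\}$ and $H(\mathbb{D})$ is the space of holomorphic functions on $\mathbb{D}$. A weight is a continuous non-increasing function $v\colon[0,1)\to(0,\infty)$, extended to $\mathbb{D}$ by $v(z):=v(|z|)$. $H^\infty_v=\{f\in H(\mathbb{D}):\|f\|_{\infty,v}:=\sup_{z\in\mathbb{D}}|f(z)|v(z)<\infty\}$ and $H^0_v=\{f\in H(\mathbb{D}):\lim_{|z|\to1^-}|f(z)|v(z)=0\}$, both with the norm $\|\cdot\|_{\infty,v}$. For $t\in[0,1]$ the generalized Cesàro operator $C_t$ is defined on $f\in H(\mathbb{D})$ by $C_tf(0)=f(0)$ and $C_tf(z)=\frac{1}{z}\int_0^z\frac{f(\xi)}{1-t\xi}\,d\xi$ for $z\in\mathbb{D}\setminus\{0\}$. *)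

theory Defs
  imports "HOL-Complex_Analysis.Complex_Analysis"
begin

definition is_weight :: "(real \<Rightarrow> real) \<Rightarrow> bool" where
  "is_weight v \<longleftrightarrow> continuous_on {0..<1} v
     \<and> (\<forall>r s. 0 \<le> r \<and> r \<le> s \<and> s < 1 \<longrightarrow> v s \<le> v r)
     \<and> (\<forall>r. 0 \<le> r \<and> r < 1 \<longrightarrow> v r > 0)"

definition wnorm :: "(real \<Rightarrow> real) \<Rightarrow> (complex \<Rightarrow> complex) \<Rightarrow> real" where
  "wnorm v f = (SUP z\<in>ball 0 1. norm (f z) * v (norm z))"

definition Hinf_v :: "(real \<Rightarrow> real) \<Rightarrow> (complex \<Rightarrow> complex) set" where
  "Hinf_v v = {f. f holomorphic_on ball 0 1
      \<and> bdd_above ((\<lambda>z. norm (f z) * v (norm z)) ` ball 0 1)}"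

definition H0_v :: "(real \<Rightarrow> real) \<Rightarrow> (complex \<Rightarrow> complex) set" where
  "H0_v v = {f. f holomorphic_on ball 0 1
      \<and> (\<forall>e>0. \<exists>r<1. \<forall>z. r < norm z \<and> norm z < 1 \<longrightarrow> norm (f z) * v (norm z) < e)}"

definition cesaro :: "real \<Rightarrow> (complex \<Rightarrow> complex) \<Rightarrow> complex \<Rightarrow> complex" where
  "cesaro t f z = (if z = 0 then f 0
     else (1 / z) * contour_integral (linepath 0 z) (\<lambda>\<xi>. f \<xi> / (1 - of_real t * \<xi>)))"

text \<open>Operator norm of T restricted to the space S (with norm wnorm v),
  valued in the extended reals (so it is +infinity if T is unbounded).\<close>
definition opnorm :: "(real \<Rightarrow> real) \<Rightarrow> (complex \<Rightarrow> complex) set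
     \<Rightarrow> ((complex \<Rightarrow> complex) \<Rightarrow> (complex \<Rightarrow> complex)) \<Rightarrow> ereal" where
  "opnorm v S T = (SUP f\<in>{f\<in>S. wnorm v f \<le> 1}. ereal (wnorm v (T f)))"

end

theory Submission
  imports Defs
begin

text \<open>
  Since C_t f (z) is the mean of f(\<xi>) / (1 - t\<xi>) over the segment [0, z],
  |1 - t\<xi>| \<ge> 1 - t and v is non-increasing, we get
  |C_t f (z)| v(|z|) \<le> max {|f \<xi>| v(|\<xi>|) : \<xi> \<in> [0, z]} / (1 - t).
  With linearity this bounds C_t by 1 / (1 - t) on H\<infinity>_v, giving continuity;
  splitting [0, z] into a compact part, where f is bounded and v(|z|) \<rightarrow> 0, and a part
  near the boundary, where |f| v is small, shows that C_t preserves H0_v.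
  For the norms, a function f in the unit ball of H\<infinity>_v is approximated by its
  dilations f(r z): they are bounded, hence lie in H0_v because v \<rightarrow> 0, they keep
  norm \<le> 1, and C_t f(r \<cdot>) \<rightarrow> C_t f pointwise as r \<rightarrow> 1 because f(r \<cdot>) \<rightarrow> f
  uniformly on compact discs.
\<close>

lemma holomorphic_on_linepath_primitive:
  assumes f: "f holomorphic_on S" and S: "open S" "convex S" and "a \<in> S" "x \<in> S"
  shows "((\<lambda>x. contour_integral (linepath a x) f) has_field_derivative f x) (at x)"
proof -
  have "((\<lambda>x. contour_integral (linepath a x) f) has_field_derivative f x) (at x within S)"
  proof (rule triangle_contour_integrals_convex_primitive)
    show "continuous_on S f"
      using f by (rule holomorphic_on_imp_continuous_on)
    fix b c assume "b \<in> S" "c \<in> S"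
    then have "path_image (linepath a b +++ linepath b c +++ linepath c a) \<subseteq> S"
      using \<open>a \<in> S\<close> \<open>convex S\<close> by (simp add: path_image_join closed_segment_subset)
    then have "(f has_contour_integral 0) (linepath a b +++ linepath b c +++ linepath c a)"
      using f S by (intro Cauchy_theorem_convex_simple) auto
    then show "contour_integral (linepath a b) f + contour_integral (linepath b c) f
        + contour_integral (linepath c a) f = 0"
      by (rule has_chain_integral_chain_integral3)
  qed (use assms in auto)
  then show ?thesis
    by (simp only: at_within_open[OF \<open>x \<in> S\<close> \<open>open S\<close>])
qed

lemma norm_one_minus_of_real_mult_ge:
  fixes \<xi> :: complex
  assumes "0 \<le> t"
  shows "1 - t * norm \<xi> \<le> norm (1 - of_real t * \<xi>)"
  using norm_triangle_ineq2[of 1 "of_real t * \<xi>"] assms by (simp add: norm_mult)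

lemma cesaro_integrand_holomorphic:
  assumes "f holomorphic_on ball 0 1" "0 \<le> t" "t \<le> 1"
  shows "(\<lambda>\<xi>. f \<xi> / (1 - of_real t * \<xi>)) holomorphic_on ball 0 1"
proof -
  have "1 - of_real t * \<xi> \<noteq> 0" if "\<xi> \<in> ball 0 1" for \<xi> :: complex
  proof -
    have "t * norm \<xi> \<le> norm \<xi>"
      using assms by (simp add: mult_left_le_one_le)
    then have "t * norm \<xi> < 1"
      using that by simp
    then show ?thesis
      using norm_one_minus_of_real_mult_ge[OF assms(2), of \<xi>] by auto
  qed
  then show ?thesis
    using assms(1) by (intro holomorphic_intros) auto
qed

lemma cesaro_holomorphic:
  assumes "f holomorphic_on ball 0 1" "0 \<le> t" "t \<le> 1"
  shows "cesaro t f holomorphic_on ball 0 1"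
proof -
  define G where "G = (\<lambda>z. contour_integral (linepath 0 z) (\<lambda>\<xi>. f \<xi> / (1 - of_real t * \<xi>)))"
  have G': "(G has_field_derivative f z / (1 - of_real t * z)) (at z)" if "z \<in> ball 0 1" for z
    unfolding G_def using cesaro_integrand_holomorphic[OF assms] that
    by (intro holomorphic_on_linepath_primitive) auto
  have "deriv G 0 = f 0"
    using DERIV_imp_deriv[OF G'] by simp
  then have "cesaro t f = (\<lambda>z. if z = 0 then deriv G 0 else (G z - G 0) / (z - 0))"
    unfolding \<open>deriv G 0 = f 0\<close> by (intro ext) (simp add: cesaro_def G_def divide_inverse mult.commute)
  moreover have "G holomorphic_on ball 0 1"
    unfolding holomorphic_on_open[OF open_ball] using G' by blast
  then have "(\<lambda>z. if z = 0 then deriv G 0 else (G z - G 0) / (z - 0)) holomorphic_on ball 0 1"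
    by (rule pole_lemma_open) simp
  ultimately show ?thesis
    by simp
qed

lemma norm_cesaro_le:
  assumes f: "f holomorphic_on ball 0 1" and t: "0 \<le> t" "t < 1" and z: "z \<in> ball 0 1"
    and K: "\<And>\<xi>. \<xi> \<in> closed_segment 0 z \<Longrightarrow> norm (f \<xi>) \<le> K"
  shows "norm (cesaro t f z) \<le> K / (1 - t)"
proof -
  have "0 \<le> K"
    using K[of 0] by (meson ends_in_segment(1) norm_ge_zero order_trans)
  have seg: "closed_segment 0 z \<subseteq> ball 0 1"
    using z by (simp add: closed_segment_subset)
  have bound: "norm (f \<xi> / (1 - of_real t * \<xi>)) \<le> K / (1 - t)" if "\<xi> \<in> closed_segment 0 z" for \<xi>
  proof -
    have "norm \<xi> \<le> 1"
      using seg that by (auto simp: subset_iff)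
    then have "1 - t \<le> 1 - t * norm \<xi>"
      using t by (simp add: mult_right_le_one_le)
    then have "1 - t \<le> norm (1 - of_real t * \<xi>)"
      using norm_one_minus_of_real_mult_ge[OF t(1), of \<xi>] by linarith
    then show ?thesis
      unfolding norm_divide using K[OF that] \<open>0 \<le> K\<close> t by (intro frac_le) auto
  qed
  show ?thesis
  proof (cases "z = 0")
    case True
    then show ?thesis
      using bound[of 0] by (simp add: cesaro_def)
  next
    case False
    have "(\<lambda>\<xi>. f \<xi> / (1 - of_real t * \<xi>)) contour_integrable_on linepath 0 z"
      using cesaro_integrand_holomorphic[OF f t(1)] t seg
      by (intro contour_integrable_holomorphic_simple[of _ "ball 0 1"]) auto
    then have "norm (contour_integral (linepath 0 z) (\<lambda>\<xi>. f \<xi> / (1 - of_real t * \<xi>)))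
        \<le> K / (1 - t) * norm (z - 0)"
      by (rule has_contour_integral_bound_linepath[OF has_contour_integral_integral])
        (use bound \<open>0 \<le> K\<close> t in auto)
    then show ?thesis
      using False by (simp add: cesaro_def norm_divide pos_divide_le_eq)
  qed
qed

lemma cesaro_diff:
  assumes f: "f holomorphic_on ball 0 1" and g: "g holomorphic_on ball 0 1"
    and t: "0 \<le> t" "t < 1" and z: "z \<in> ball 0 1"
  shows "cesaro t g z - cesaro t f z = cesaro t (\<lambda>w. g w - f w) z"
proof (cases "z = 0")
  case False
  have "closed_segment 0 z \<subseteq> ball 0 1"
    using z by (simp add: closed_segment_subset)
  then have "(\<lambda>\<xi>. h \<xi> / (1 - of_real t * \<xi>)) contour_integrable_on linepath 0 z"
    if "h holomorphic_on ball 0 1" for h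
    using cesaro_integrand_holomorphic[OF that] t
    by (intro contour_integrable_holomorphic_simple[of _ "ball 0 1"]) auto
  then show ?thesis
    using False f g
    by (simp add: cesaro_def diff_divide_distrib contour_integral_diff right_diff_distrib)
qed (simp add: cesaro_def)

lemma is_weight_antimono:
  "is_weight v \<Longrightarrow> 0 \<le> r \<Longrightarrow> r \<le> s \<Longrightarrow> s < 1 \<Longrightarrow> v s \<le> v r"
  unfolding is_weight_def by blast

lemma is_weight_pos: "is_weight v \<Longrightarrow> 0 \<le> r \<Longrightarrow> r < 1 \<Longrightarrow> 0 < v r"
  unfolding is_weight_def by blast

lemma is_weight_norm_antimono:
  "is_weight v \<Longrightarrow> norm (a::complex) \<le> norm b \<Longrightarrow> norm b < 1 \<Longrightarrow> v (norm b) \<le> v (norm a)"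
  by (rule is_weight_antimono) auto

lemma eventually_mult_weight_less:
  fixes v :: "real \<Rightarrow> real"
  assumes "(v \<longlongrightarrow> 0) (at_left 1)" "0 < e"
  obtains R where "R < 1" "\<And>s. R < s \<Longrightarrow> s < 1 \<Longrightarrow> M * v s < e"
proof -
  have "((\<lambda>s. M * v s) \<longlongrightarrow> 0) (at_left 1)"
    using assms(1) by (rule tendsto_mult_right_zero)
  then have "\<forall>\<^sub>F s in at_left 1. M * v s < e"
    using assms(2) by (rule order_tendstoD(2))
  then obtain R where "R < 1" "\<forall>s>R. s < 1 \<longrightarrow> M * v s < e"
    unfolding eventually_at_left_field by blast
  then show ?thesis
    using that by blast
qed

lemma holomorphic_bounded_on_cball:
  assumes "f holomorphic_on ball 0 1" "r < 1"
  obtains M where "\<And>z. norm z \<le> r \<Longrightarrow> norm (f z) \<le> M"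
proof -
  have "cball 0 r \<subseteq> ball 0 1"
    using assms(2) by auto
  then have "continuous_on (cball 0 r) f"
    using assms(1) holomorphic_on_imp_continuous_on continuous_on_subset by blast
  then have "bounded (f ` cball 0 r)"
    by (intro compact_imp_bounded compact_continuous_image) auto
  then obtain M where "\<forall>z\<in>cball 0 r. norm (f z) \<le> M"
    unfolding bounded_iff by auto
  then show ?thesis
    using that by (metis mem_cball_0)
qed

lemma wnorm_upper:
  "bdd_above ((\<lambda>z. norm (f z) * v (norm z)) ` ball 0 1) \<Longrightarrow> z \<in> ball 0 1
    \<Longrightarrow> norm (f z) * v (norm z) \<le> wnorm v f"
  unfolding wnorm_def by (rule cSUP_upper)

lemma wnorm_least:
  "(\<And>z. z \<in> ball 0 1 \<Longrightarrow> norm (f z) * v (norm z) \<le> B) \<Longrightarrow> wnorm v f \<le> B"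
  unfolding wnorm_def by (rule cSUP_least) auto

lemma H0_v_subset_Hinf_v:
  assumes v: "is_weight v"
  shows "H0_v v \<subseteq> Hinf_v v"
proof
  fix f assume f: "f \<in> H0_v v"
  then have hol: "f holomorphic_on ball 0 1"
    unfolding H0_v_def by blast
  have "\<exists>r<1. \<forall>z. r < norm z \<and> norm z < 1 \<longrightarrow> norm (f z) * v (norm z) < 1"
    using f unfolding H0_v_def by simp
  then obtain r where r: "r < 1" "\<And>z. r < norm z \<Longrightarrow> norm z < 1 \<Longrightarrow> norm (f z) * v (norm z) < 1"
    by blast
  obtain M where M: "\<And>z. norm z \<le> r \<Longrightarrow> norm (f z) \<le> M"
    using holomorphic_bounded_on_cball[OF hol r(1)] by blast
  have "norm (f z) * v (norm z) \<le> max (M * v 0) 1" if z: "norm z < 1" for z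
  proof (cases "norm z \<le> r")
    case True
    have "0 \<le> v (norm z)" "v (norm z) \<le> v 0"
      using is_weight_pos[OF v, of "norm z"] is_weight_antimono[OF v, of 0 "norm z"] z by simp_all
    then have "norm (f z) * v (norm z) \<le> M * v 0"
      using M[OF True] by (meson mult_mono norm_ge_zero order_trans)
    then show ?thesis by simp
  next
    case False
    then show ?thesis
      using r(2)[of z] z by simp
  qed
  then have "bdd_above ((\<lambda>z. norm (f z) * v (norm z)) ` ball 0 1)"
    by (intro bdd_aboveI2) simp
  then show "f \<in> Hinf_v v"
    using hol unfolding Hinf_v_def by blast
qed

lemma Hinf_v_diff:
  assumes v: "is_weight v" and f: "f \<in> Hinf_v v" and g: "g \<in> Hinf_v v"
  shows "(\<lambda>z. g z - f z) \<in> Hinf_v v"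
proof -
  obtain Bf Bg where
    Bf: "\<And>z. z \<in> ball 0 1 \<Longrightarrow> norm (f z) * v (norm z) \<le> Bf" and
    Bg: "\<And>z. z \<in> ball 0 1 \<Longrightarrow> norm (g z) * v (norm z) \<le> Bg"
    using f g unfolding Hinf_v_def bdd_above_def by fast
  have "norm (g z - f z) * v (norm z) \<le> Bg + Bf" if z: "z \<in> ball 0 1" for z
  proof -
    have "norm (g z - f z) * v (norm z) \<le> (norm (g z) + norm (f z)) * v (norm z)"
      using is_weight_pos[OF v, of "norm z"] z by (intro mult_right_mono norm_triangle_ineq4) auto
    also have "\<dots> \<le> Bg + Bf"
      using Bf[OF z] Bg[OF z] by (simp add: distrib_right)
    finally show ?thesis .
  qed
  then show ?thesis
    using f g unfolding Hinf_v_def by (auto intro!: bdd_aboveI2 holomorphic_intros)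
qed

lemma norm_cesaro_weighted_le:
  assumes v: "is_weight v" and f: "f holomorphic_on ball 0 1" and t: "0 \<le> t" "t < 1"
    and z: "z \<in> ball 0 1"
    and K: "\<And>\<xi>. \<xi> \<in> closed_segment 0 z \<Longrightarrow> norm (f \<xi>) * v (norm z) \<le> K"
  shows "norm (cesaro t f z) * v (norm z) \<le> K / (1 - t)"
proof -
  have vz: "0 < v (norm z)"
    using is_weight_pos[OF v, of "norm z"] z by simp
  have "norm (cesaro t f z) \<le> K / v (norm z) / (1 - t)"
    using K vz by (intro norm_cesaro_le[OF f t z]) (simp add: pos_le_divide_eq)
  then show ?thesis
    using vz t by (simp add: field_simps)
qed

lemma wnorm_cesaro_le:
  assumes v: "is_weight v" and t: "0 \<le> t" "t < 1" and f: "f \<in> Hinf_v v"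
  shows "wnorm v (cesaro t f) \<le> wnorm v f / (1 - t)"
proof (rule wnorm_least)
  fix z :: complex assume z: "z \<in> ball 0 1"
  have hol: "f holomorphic_on ball 0 1" and bdd: "bdd_above ((\<lambda>z. norm (f z) * v (norm z)) ` ball 0 1)"
    using f unfolding Hinf_v_def by auto
  show "norm (cesaro t f z) * v (norm z) \<le> wnorm v f / (1 - t)"
  proof (rule norm_cesaro_weighted_le[OF v hol t z])
    fix \<xi> assume \<xi>: "\<xi> \<in> closed_segment 0 z"
    then have "norm \<xi> \<le> norm z"
      using segment_bound1[OF \<xi>] by simp
    then have "v (norm z) \<le> v (norm \<xi>)"
      using is_weight_norm_antimono[OF v] z by simp
    then have "norm (f \<xi>) * v (norm z) \<le> norm (f \<xi>) * v (norm \<xi>)"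
      by (simp add: mult_left_mono)
    also have "\<dots> \<le> wnorm v f"
      using \<open>norm \<xi> \<le> norm z\<close> z by (intro wnorm_upper[OF bdd]) simp
    finally show "norm (f \<xi>) * v (norm z) \<le> wnorm v f" .
  qed
qed

lemma H0_v_max_modulus_weight_small:
  assumes v: "is_weight v" and v0: "(v \<longlongrightarrow> 0) (at_left 1)" and f: "f \<in> H0_v v" and e: "0 < e"
  obtains R where "R < 1"
    "\<And>(z::complex) \<xi>. R < norm z \<Longrightarrow> norm z < 1 \<Longrightarrow> norm \<xi> \<le> norm z
      \<Longrightarrow> norm (f \<xi>) * v (norm z) < e"
proof -
  have hol: "f holomorphic_on ball 0 1"
    using f unfolding H0_v_def by blast
  have "\<exists>r<1. \<forall>z. r < norm z \<and> norm z < 1 \<longrightarrow> norm (f z) * v (norm z) < e"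
    using f e unfolding H0_v_def by simp
  then obtain r where r: "r < 1" "\<And>z. r < norm z \<Longrightarrow> norm z < 1 \<Longrightarrow> norm (f z) * v (norm z) < e"
    by blast
  obtain M where M: "\<And>z. norm z \<le> r \<Longrightarrow> norm (f z) \<le> M"
    using holomorphic_bounded_on_cball[OF hol r(1)] by blast
  obtain R where R: "R < 1" "\<And>s. R < s \<Longrightarrow> s < 1 \<Longrightarrow> M * v s < e"
    using eventually_mult_weight_less[OF v0 e] by blast
  show ?thesis
  proof (rule that[of "max r R"])
    show "max r R < 1"
      using r(1) R(1) by simp
    fix z \<xi> :: complex assume z: "max r R < norm z" "norm z < 1" and \<xi>: "norm \<xi> \<le> norm z"
    have vz: "0 \<le> v (norm z)" "v (norm z) \<le> v (norm \<xi>)"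
      using is_weight_pos[OF v, of "norm z"] is_weight_norm_antimono[OF v \<xi>] z by simp_all
    show "norm (f \<xi>) * v (norm z) < e"
    proof (cases "r < norm \<xi>")
      case True
      then have "norm (f \<xi>) * v (norm \<xi>) < e"
        using r(2) \<xi> z by simp
      then show ?thesis
        using vz by (meson mult_left_mono norm_ge_zero order_le_less_trans)
    next
      case False
      then have "norm (f \<xi>) * v (norm z) \<le> M * v (norm z)"
        using M vz by (simp add: mult_right_mono)
      also have "\<dots> < e"
        using R(2) z by simp
      finally show ?thesis .
    qed
  qed
qed

lemma cesaro_H0_v:
  assumes v: "is_weight v" and v0: "(v \<longlongrightarrow> 0) (at_left 1)" and t: "0 \<le> t" "t < 1"
    and f: "f \<in> H0_v v"
  shows "cesaro t f \<in> H0_v v"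
  unfolding H0_v_def mem_Collect_eq
proof (intro conjI allI impI)
  have hol: "f holomorphic_on ball 0 1"
    using f unfolding H0_v_def by blast
  then show "cesaro t f holomorphic_on ball 0 1"
    using cesaro_holomorphic t by simp
  fix e :: real assume e: "0 < e"
  obtain R where R: "R < 1" "\<And>(z::complex) \<xi>. R < norm z \<Longrightarrow> norm z < 1 \<Longrightarrow> norm \<xi> \<le> norm z
      \<Longrightarrow> norm (f \<xi>) * v (norm z) < e * (1 - t) / 2"
    using H0_v_max_modulus_weight_small[OF v v0 f, of "e * (1 - t) / 2"] e t by auto
  have "norm (cesaro t f z) * v (norm z) < e" if z: "R < norm z" "norm z < 1" for z :: complex
  proof -
    have "norm (cesaro t f z) * v (norm z) \<le> e * (1 - t) / 2 / (1 - t)"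
      using z R(2)[OF z] segment_bound1[of _ 0 z]
      by (intro norm_cesaro_weighted_le[OF v hol t] less_imp_le) auto
    also have "\<dots> = e / 2"
      using t by (simp add: divide_simps)
    also have "\<dots> < e"
      using e by simp
    finally show ?thesis .
  qed
  then show "\<exists>r<1. \<forall>z. r < norm z \<and> norm z < 1 \<longrightarrow> norm (cesaro t f z) * v (norm z) < e"
    using R(1) by blast
qed

lemma wnorm_cesaro_diff_le:
  assumes v: "is_weight v" and t: "0 \<le> t" "t < 1" and f: "f \<in> Hinf_v v" and g: "g \<in> Hinf_v v"
  shows "wnorm v (\<lambda>z. cesaro t g z - cesaro t f z) \<le> wnorm v (\<lambda>z. g z - f z) / (1 - t)"
proof -
  have "f holomorphic_on ball 0 1" "g holomorphic_on ball 0 1"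
    using f g unfolding Hinf_v_def by auto
  then have "wnorm v (\<lambda>z. cesaro t g z - cesaro t f z) = wnorm v (cesaro t (\<lambda>z. g z - f z))"
    unfolding wnorm_def using cesaro_diff t by (intro SUP_cong) auto
  also have "\<dots> \<le> wnorm v (\<lambda>z. g z - f z) / (1 - t)"
    by (rule wnorm_cesaro_le[OF v t Hinf_v_diff[OF v f g]])
  finally show ?thesis .
qed

lemma bounded_holomorphic_in_H0_v:
  assumes v: "is_weight v" and v0: "(v \<longlongrightarrow> 0) (at_left 1)" and hol: "g holomorphic_on ball 0 1"
    and M: "\<And>z. z \<in> ball 0 1 \<Longrightarrow> norm (g z) \<le> M"
  shows "g \<in> H0_v v"
  unfolding H0_v_def mem_Collect_eq
proof (intro conjI allI impI hol)
  fix e :: real assume e: "0 < e"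
  obtain R where R: "R < 1" "\<And>s. R < s \<Longrightarrow> s < 1 \<Longrightarrow> M * v s < e"
    using eventually_mult_weight_less[OF v0 e] by blast
  have "norm (g z) * v (norm z) < e" if z: "R < norm z" "norm z < 1" for z :: complex
  proof -
    have "norm (g z) * v (norm z) \<le> M * v (norm z)"
      using M[of z] is_weight_pos[OF v, of "norm z"] z by (simp add: mult_right_mono)
    also have "\<dots> < e"
      using R(2) z by blast
    finally show ?thesis .
  qed
  then show "\<exists>r<1. \<forall>z. r < norm z \<and> norm z < 1 \<longrightarrow> norm (g z) * v (norm z) < e"
    using R(1) by blast
qed

lemma norm_of_real_mult_le:
  fixes z :: complex
  shows "0 \<le> r \<Longrightarrow> r \<le> 1 \<Longrightarrow> norm (of_real r * z) \<le> norm z"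
  by (simp add: norm_mult mult_left_le_one_le)

lemma dilation_holomorphic:
  assumes hol: "f holomorphic_on ball 0 1" and r: "0 \<le> r" "r \<le> 1"
  shows "(\<lambda>z. f (of_real r * z)) holomorphic_on ball 0 1"
proof -
  have "(\<lambda>z::complex. of_real r * z) ` ball 0 1 \<subseteq> ball 0 1"
  proof (rule image_subsetI)
    fix z :: complex assume "z \<in> ball 0 1"
    then show "of_real r * z \<in> ball 0 1"
      using norm_of_real_mult_le[OF r, of z] by simp
  qed
  moreover have "(\<lambda>z::complex. of_real r * z) holomorphic_on ball 0 1"
    by (intro holomorphic_intros)
  ultimately have "(f \<circ> (\<lambda>z. of_real r * z)) holomorphic_on ball 0 1"
    using holomorphic_on_compose_gen[OF _ hol] by blast
  then show ?thesis
    by (simp add: o_def)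
qed

lemma dilation_in_H0_v:
  assumes v: "is_weight v" and v0: "(v \<longlongrightarrow> 0) (at_left 1)" and hol: "f holomorphic_on ball 0 1"
    and r: "0 \<le> r" "r < 1"
  shows "(\<lambda>z. f (of_real r * z)) \<in> H0_v v"
proof -
  obtain M where M: "\<And>z. norm z \<le> r \<Longrightarrow> norm (f z) \<le> M"
    using holomorphic_bounded_on_cball[OF hol r(2)] by blast
  have "norm (f (of_real r * z)) \<le> M" if "z \<in> ball 0 1" for z :: complex
  proof (rule M)
    have "norm z \<le> 1"
      using that by simp
    then show "norm (of_real r * z) \<le> r"
      using r by (simp add: norm_mult mult_right_le_one_le)
  qed
  then show ?thesis
    using r by (intro bounded_holomorphic_in_H0_v[OF v v0 dilation_holomorphic[OF hol]]) auto
qed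

lemma wnorm_dilation_le:
  assumes v: "is_weight v" and f: "f \<in> Hinf_v v" and r: "0 \<le> r" "r \<le> 1"
  shows "wnorm v (\<lambda>z. f (of_real r * z)) \<le> wnorm v f"
proof (rule wnorm_least)
  fix z :: complex assume z: "z \<in> ball 0 1"
  have rz: "norm (of_real r * z) \<le> norm z"
    using norm_of_real_mult_le[OF r] .
  then have "norm (f (of_real r * z)) * v (norm z) \<le> norm (f (of_real r * z)) * v (norm (of_real r * z))"
    using is_weight_norm_antimono[OF v rz] z by (simp add: mult_left_mono)
  also have "\<dots> \<le> wnorm v f"
    using f rz z unfolding Hinf_v_def by (intro wnorm_upper) auto
  finally show "norm (f (of_real r * z)) * v (norm z) \<le> wnorm v f" .
qed

lemma eventually_dilation_uniformly_close:
  fixes f :: "complex \<Rightarrow> 'a::metric_space"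
  assumes f: "continuous_on (cball 0 \<rho>) f" and e: "0 < e"
  shows "\<forall>\<^sub>F r in at_left 1. \<forall>\<xi>\<in>cball 0 \<rho>. dist (f (of_real r * \<xi>)) (f \<xi>) < e"
proof -
  obtain \<delta> where \<delta>: "0 < \<delta>"
    "\<And>x y. x \<in> cball 0 \<rho> \<Longrightarrow> y \<in> cball 0 \<rho> \<Longrightarrow> dist y x < \<delta> \<Longrightarrow> dist (f y) (f x) < e"
    using compact_uniformly_continuous[OF f compact_cball] e
    unfolding uniformly_continuous_on_def by metis
  have "max 0 (1 - \<delta> / (\<bar>\<rho>\<bar> + 1)) < 1"
    using \<delta>(1) by simp
  then have "\<forall>\<^sub>F r in at_left 1. r \<in> {max 0 (1 - \<delta> / (\<bar>\<rho>\<bar> + 1))<..<1}"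
    by (rule eventually_at_left_real)
  then show ?thesis
  proof eventually_elim
    case (elim r)
    then have r: "0 \<le> r" "r \<le> 1" "(1 - r) * (\<bar>\<rho>\<bar> + 1) < \<delta>"
      by (auto simp: field_simps)
    show ?case
    proof
      fix \<xi> :: complex assume \<xi>: "\<xi> \<in> cball 0 \<rho>"
      have "dist (of_real r * \<xi>) \<xi> = norm (of_real (r - 1) * \<xi>)"
        by (simp add: dist_norm algebra_simps)
      also have "\<dots> = (1 - r) * norm \<xi>"
        unfolding norm_mult norm_of_real using r by simp
      also have "\<dots> \<le> (1 - r) * (\<bar>\<rho>\<bar> + 1)"
        using \<xi> r by (intro mult_left_mono) auto
      finally have "dist (of_real r * \<xi>) \<xi> < \<delta>"
        using r(3) by simp
      moreover have "of_real r * \<xi> \<in> cball 0 \<rho>"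
        using norm_of_real_mult_le[OF r(1,2), of \<xi>] \<xi> by simp
      ultimately show "dist (f (of_real r * \<xi>)) (f \<xi>) < e"
        using \<delta>(2) \<xi> by blast
    qed
  qed
qed

lemma cesaro_dilation_tendsto:
  assumes hol: "f holomorphic_on ball 0 1" and t: "0 \<le> t" "t < 1" and z: "z \<in> ball 0 1"
  shows "((\<lambda>r. cesaro t (\<lambda>w. f (of_real r * w)) z) \<longlongrightarrow> cesaro t f z) (at_left 1)"
proof (rule tendstoI)
  fix e :: real assume e: "0 < e"
  have "continuous_on (cball 0 (norm z)) f"
    using z by (intro continuous_on_subset[OF holomorphic_on_imp_continuous_on[OF hol]]) auto
  then have "\<forall>\<^sub>F r in at_left 1. \<forall>\<xi>\<in>cball 0 (norm z). dist (f (of_real r * \<xi>)) (f \<xi>) < e * (1 - t) / 2"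
    using e t by (intro eventually_dilation_uniformly_close) auto
  moreover have "\<forall>\<^sub>F r in at_left 1. r \<in> {0<..<1::real}"
    by (rule eventually_at_left_real) simp
  ultimately show "\<forall>\<^sub>F r in at_left 1. dist (cesaro t (\<lambda>w. f (of_real r * w)) z) (cesaro t f z) < e"
  proof eventually_elim
    case (elim r)
    have hol_r: "(\<lambda>w. f (of_real r * w)) holomorphic_on ball 0 1"
      using dilation_holomorphic[OF hol] elim(2) by simp
    have "dist (cesaro t (\<lambda>w. f (of_real r * w)) z) (cesaro t f z)
        = norm (cesaro t (\<lambda>w. f (of_real r * w) - f w) z)"
      by (simp add: dist_norm cesaro_diff[OF hol hol_r t z])
    also have "\<dots> \<le> e * (1 - t) / 2 / (1 - t)"
    proof (rule norm_cesaro_le[OF _ t z])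
      show "(\<lambda>w. f (of_real r * w) - f w) holomorphic_on ball 0 1"
        using hol hol_r by (intro holomorphic_intros)
      fix \<xi> assume "\<xi> \<in> closed_segment 0 z"
      then have "\<xi> \<in> cball 0 (norm z)"
        using segment_bound1 by fastforce
      then show "norm (f (of_real r * \<xi>) - f \<xi>) \<le> e * (1 - t) / 2"
        using elim(1) by (auto simp: dist_norm less_imp_le)
    qed
    also have "\<dots> < e"
      using e t by (simp add: divide_simps)
    finally show ?case .
  qed
qed

lemma ereal_cSUP_least:
  assumes "A \<noteq> {}" "\<And>x. x \<in> A \<Longrightarrow> ereal (f x) \<le> X"
  shows "ereal (SUP x\<in>A. f x) \<le> X"
proof (cases X)
  case (real c)
  then show ?thesis
    using assms by (simp add: cSUP_least)
next
  case MInf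
  then show ?thesis
    using assms by auto
qed simp

lemma wnorm_cesaro_le_opnorm_H0_v:
  assumes v: "is_weight v" and v0: "(v \<longlongrightarrow> 0) (at_left 1)" and t: "0 \<le> t" "t < 1"
    and f: "f \<in> Hinf_v v" and f1: "wnorm v f \<le> 1"
  shows "ereal (wnorm v (cesaro t f)) \<le> opnorm v (H0_v v) (cesaro t)"
proof -
  have hol: "f holomorphic_on ball 0 1"
    using f unfolding Hinf_v_def by blast
  have "ereal (norm (cesaro t f z) * v (norm z)) \<le> opnorm v (H0_v v) (cesaro t)"
    if z: "z \<in> ball 0 1" for z
  proof (rule tendsto_le[OF trivial_limit_at_left_real tendsto_const])
    show "((\<lambda>r. ereal (norm (cesaro t (\<lambda>w. f (of_real r * w)) z) * v (norm z)))
        \<longlongrightarrow> ereal (norm (cesaro t f z) * v (norm z))) (at_left 1)"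
      by (intro tendsto_ereal tendsto_mult_right tendsto_norm cesaro_dilation_tendsto hol t z)
    have "\<forall>\<^sub>F r in at_left 1. r \<in> {0<..<1::real}"
      by (rule eventually_at_left_real) simp
    then show "\<forall>\<^sub>F r in at_left 1. ereal (norm (cesaro t (\<lambda>w. f (of_real r * w)) z) * v (norm z))
        \<le> opnorm v (H0_v v) (cesaro t)"
    proof eventually_elim
      case (elim r)
      let ?f\<^sub>r = "\<lambda>w. f (of_real r * w)"
      have f\<^sub>r: "?f\<^sub>r \<in> H0_v v"
        using dilation_in_H0_v[OF v v0 hol] elim by simp
      have "wnorm v ?f\<^sub>r \<le> wnorm v f"
        using wnorm_dilation_le[OF v f, of r] elim by simp
      then have "wnorm v ?f\<^sub>r \<le> 1"
        using f1 by simp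
      then have "ereal (wnorm v (cesaro t ?f\<^sub>r)) \<le> opnorm v (H0_v v) (cesaro t)"
        unfolding opnorm_def using f\<^sub>r by (intro SUP_upper) simp
      moreover have "cesaro t ?f\<^sub>r \<in> Hinf_v v"
        using cesaro_H0_v[OF v v0 t f\<^sub>r] H0_v_subset_Hinf_v[OF v] by blast
      then have "norm (cesaro t ?f\<^sub>r z) * v (norm z) \<le> wnorm v (cesaro t ?f\<^sub>r)"
        using z unfolding Hinf_v_def by (intro wnorm_upper) auto
      ultimately show ?case
        by (meson ereal_less_eq(3) order_trans)
    qed
  qed
  then show ?thesis
    unfolding wnorm_def by (intro ereal_cSUP_least) auto
qed

theorem corollary2p5:
  fixes v :: "real \<Rightarrow> real" and t :: real
  assumes "is_weight v"
    and "(v \<longlongrightarrow> 0) (at_left 1)"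
    and "0 \<le> t" and "t < 1"
  shows "(\<forall>f\<in>H0_v v. cesaro t f \<in> H0_v v)
    \<and> (\<forall>f\<in>H0_v v. \<forall>e>0. \<exists>d>0. \<forall>g\<in>H0_v v.
          wnorm v (\<lambda>z. g z - f z) < d \<longrightarrow> wnorm v (\<lambda>z. cesaro t g z - cesaro t f z) < e)
    \<and> opnorm v (H0_v v) (cesaro t) = opnorm v (Hinf_v v) (cesaro t)"
proof (intro conjI ballI allI impI)
  note v = assms(1) and v0 = assms(2) and t = assms(3,4)
  show "cesaro t f \<in> H0_v v" if "f \<in> H0_v v" for f
    using cesaro_H0_v[OF v v0 t that] .
  show "\<exists>d>0. \<forall>g\<in>H0_v v. wnorm v (\<lambda>z. g z - f z) < d
      \<longrightarrow> wnorm v (\<lambda>z. cesaro t g z - cesaro t f z) < e"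
    if f: "f \<in> H0_v v" and e: "0 < e" for f e
  proof (intro exI[of _ "e * (1 - t)"] conjI ballI impI)
    fix g assume g: "g \<in> H0_v v" and close: "wnorm v (\<lambda>z. g z - f z) < e * (1 - t)"
    have "wnorm v (\<lambda>z. cesaro t g z - cesaro t f z) \<le> wnorm v (\<lambda>z. g z - f z) / (1 - t)"
      using f g H0_v_subset_Hinf_v[OF v] by (intro wnorm_cesaro_diff_le[OF v t]) auto
    also have "\<dots> < e"
      using close t by (simp add: pos_divide_less_eq)
    finally show "wnorm v (\<lambda>z. cesaro t g z - cesaro t f z) < e" .
  qed (use e t in simp)
  show "opnorm v (H0_v v) (cesaro t) = opnorm v (Hinf_v v) (cesaro t)"
  proof (rule antisym)
    show "opnorm v (H0_v v) (cesaro t) \<le> opnorm v (Hinf_v v) (cesaro t)"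
      unfolding opnorm_def using H0_v_subset_Hinf_v[OF v] by (intro SUP_subset_mono) auto
    show "opnorm v (Hinf_v v) (cesaro t) \<le> opnorm v (H0_v v) (cesaro t)"
      unfolding opnorm_def[of v "Hinf_v v"]
      using wnorm_cesaro_le_opnorm_H0_v[OF v v0 t] by (intro SUP_least) auto
  qed
qed

end
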